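(* Let $M,N$ be matroids on a common set $E$ and $W:=W(M,N)$. Then every element of $B(M,N,W)$ is a nice feasible set (with respect to $(M,N)$).
   Context: Matroids are possibly infinite. $M^*$ dual, $M\upharpoonright X$ restriction, $M/X:=(M^*\upharpoonright(E\setminus X))^*$ (on $E\setminus X$), $M.X:=M/(E\setminus X)$. A loop is an element $e$ with $\{e\}$ dependent; $r(K)=0$ means the empty set is a base of $K$. $W$ is an $(M,N)$-wave if $M\upharpoonright W$ has a base independent in $N.W$; the union of all waves is a wave, denoted $W(M,N)$. $B(M,N,X)$ is the set of common bases of $M\upharpoonright X$ and $N.X$. $\mathsf{cond}(M,N)$: for every $(M,N)$-wave $W$, $N.W$ has an $M$-independent base. $\mathsf{cond}^+(M,N)$: $W(M,N)$ consists of $M$-loops and $r(N.W(M,N))=0$. A set $I$ independent in both $M$ and $N$ is feasible if $\mathsf{cond}(M/I,N/I)$ holds, and nice feasible if moreover $\mathsf{cond}^+(M/I,N/I)$ holds. *)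

theory Defs
  imports Main
begin

text \<open>A (possibly infinite) matroid is represented by its ground set and its
  family of independent sets. Axioms: (I1)-(I3) plus (IM) of Bruhn et al.\<close>

type_synonym 'a matroid = "'a set \<times> 'a set set"

definition carrier :: "'a matroid \<Rightarrow> 'a set" where
  "carrier M = fst M"

definition indep :: "'a matroid \<Rightarrow> 'a set \<Rightarrow> bool" where
  "indep M I \<longleftrightarrow> I \<in> snd M"

definition maximal_in :: "'a set set \<Rightarrow> 'a set \<Rightarrow> bool" where
  "maximal_in S B \<longleftrightarrow> B \<in> S \<and> (\<forall>J\<in>S. B \<subseteq> J \<longrightarrow> J = B)"

definition base :: "'a matroid \<Rightarrow> 'a set \<Rightarrow> bool" where
  "base M B \<longleftrightarrow> maximal_in {I. indep M I} B"

definition matroid :: "'a matroid \<Rightarrow> bool" where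
  "matroid M \<longleftrightarrow>
     (\<forall>I. indep M I \<longrightarrow> I \<subseteq> carrier M) \<and>
     indep M {} \<and>
     (\<forall>I J. indep M J \<and> I \<subseteq> J \<longrightarrow> indep M I) \<and>
     (\<forall>I J. indep M I \<and> \<not> base M I \<and> base M J \<longrightarrow>
        (\<exists>x \<in> J - I. indep M (insert x I))) \<and>
     (\<forall>I X. indep M I \<and> I \<subseteq> X \<and> X \<subseteq> carrier M \<longrightarrow>
        (\<exists>B. maximal_in {J. indep M J \<and> I \<subseteq> J \<and> J \<subseteq> X} B))"

definition dual :: "'a matroid \<Rightarrow> 'a matroid" where
  "dual M = (carrier M, {I. I \<subseteq> carrier M \<and> (\<exists>B. base M B \<and> I \<inter> B = {})})"

definition restr :: "'a matroid \<Rightarrow> 'a set \<Rightarrow> 'a matroid" where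
  "restr M X = (X, {I. indep M I \<and> I \<subseteq> X})"

definition contract :: "'a matroid \<Rightarrow> 'a set \<Rightarrow> 'a matroid" where
  "contract M X = dual (restr (dual M) (carrier M - X))"

definition contr_to :: "'a matroid \<Rightarrow> 'a set \<Rightarrow> 'a matroid" where
  "contr_to M X = contract M (carrier M - X)"

definition loop :: "'a matroid \<Rightarrow> 'a \<Rightarrow> bool" where
  "loop M e \<longleftrightarrow> e \<in> carrier M \<and> \<not> indep M {e}"

definition wave :: "'a matroid \<Rightarrow> 'a matroid \<Rightarrow> 'a set \<Rightarrow> bool" where
  "wave M N W \<longleftrightarrow> W \<subseteq> carrier M \<and>
     (\<exists>B. base (restr M W) B \<and> indep (contr_to N W) B)"

definition Wave :: "'a matroid \<Rightarrow> 'a matroid \<Rightarrow> 'a set" where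
  "Wave M N = \<Union>{W. wave M N W}"

definition common_bases :: "'a matroid \<Rightarrow> 'a matroid \<Rightarrow> 'a set \<Rightarrow> 'a set set" where
  "common_bases M N X = {B. base (restr M X) B \<and> base (contr_to N X) B}"

definition cond :: "'a matroid \<Rightarrow> 'a matroid \<Rightarrow> bool" where
  "cond M N \<longleftrightarrow> (\<forall>W. wave M N W \<longrightarrow> (\<exists>B. base (contr_to N W) B \<and> indep M B))"

definition cond_plus :: "'a matroid \<Rightarrow> 'a matroid \<Rightarrow> bool" where
  "cond_plus M N \<longleftrightarrow> (\<forall>e \<in> Wave M N. loop M e) \<and> base (contr_to N (Wave M N)) {}"

definition feasible :: "'a matroid \<Rightarrow> 'a matroid \<Rightarrow> 'a set \<Rightarrow> bool" where
  "feasible M N I \<longleftrightarrow> indep M I \<and> indep N I \<and> cond (contract M I) (contract N I)"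

definition nice_feasible :: "'a matroid \<Rightarrow> 'a matroid \<Rightarrow> 'a set \<Rightarrow> bool" where
  "nice_feasible M N I \<longleftrightarrow> feasible M N I \<and> cond_plus (contract M I) (contract N I)"

end

theory Submission
  imports Defs
begin

(* Let I be a common base of M|W and N.W for W = W(M,N), and let Z be a basis of E - W in N, so
   that Z \<union> I is a base of N.  Any (M/I,N/I)-wave W' glues onto W: if B' witnesses W', then
   I \<union> B' witnesses that W \<union> W' is an (M,N)-wave.  Hence W' \<subseteq> W - I by maximality of W, and
   on W - I the situation is degenerate: its elements are loops of M/I since I is a base of M|W,
   and (N/I).W' = N/(E - W') has rank 0 since E - W' contains the base Z \<union> I. *)

lemma base_iff: "base K B \<longleftrightarrow> indep K B \<and> (\<forall>J. indep K J \<and> B \<subseteq> J \<longrightarrow> J = B)"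
  unfolding base_def maximal_in_def by auto

lemma base_cong: "indep K = indep L \<Longrightarrow> base K = base L"
  unfolding base_def by simp

lemma bases_subset_eq: "base K B \<Longrightarrow> base K B' \<Longrightarrow> B \<subseteq> B' \<Longrightarrow> B = B'"
  unfolding base_iff by blast

lemma carrier_dual [simp]: "carrier (dual K) = carrier K"
  unfolding dual_def carrier_def by simp

lemma indep_dual: "indep (dual K) J \<longleftrightarrow> J \<subseteq> carrier K \<and> (\<exists>B. base K B \<and> J \<inter> B = {})"
  unfolding dual_def indep_def by simp

lemma carrier_restr [simp]: "carrier (restr K X) = X"
  unfolding restr_def carrier_def by simp

lemma indep_restr: "indep (restr K X) J \<longleftrightarrow> indep K J \<and> J \<subseteq> X"
  unfolding restr_def indep_def by simp

lemma base_restr_iff: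
  "base (restr K X) Z \<longleftrightarrow> indep K Z \<and> Z \<subseteq> X \<and> (\<forall>J. indep K J \<and> Z \<subseteq> J \<and> J \<subseteq> X \<longrightarrow> J = Z)"
  unfolding base_iff indep_restr by blast

lemma carrier_contract [simp]: "carrier (contract K X) = carrier K - X"
  unfolding contract_def by simp

lemma indep_contract_iff_coindep:
  "indep (contract K X) T \<longleftrightarrow> T \<subseteq> carrier K - X \<and>
     (\<exists>C. maximal_in {J. indep (dual K) J \<and> J \<subseteq> carrier K - X} C \<and> T \<inter> C = {})"
proof -
  have "Collect (indep (restr (dual K) (carrier K - X))) = {J. indep (dual K) J \<and> J \<subseteq> carrier K - X}"
    by (auto simp: indep_restr)
  then show ?thesis
    unfolding contract_def indep_dual base_def by simp
qed

lemma indep_contract_subset: "indep (contract K X) T \<Longrightarrow> T \<subseteq> carrier K - X"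
  unfolding indep_contract_iff_coindep by blast

lemma matroid_axioms:
  assumes "matroid K"
  shows "\<forall>I. indep K I \<longrightarrow> I \<subseteq> carrier K" and "indep K {}"
    and "\<forall>I J. indep K J \<and> I \<subseteq> J \<longrightarrow> indep K I"
    and "\<forall>I B. indep K I \<and> \<not> base K I \<and> base K B \<longrightarrow> (\<exists>x \<in> B - I. indep K (insert x I))"
    and "\<forall>I X. indep K I \<and> I \<subseteq> X \<and> X \<subseteq> carrier K \<longrightarrow>
           (\<exists>B. maximal_in {J. indep K J \<and> I \<subseteq> J \<and> J \<subseteq> X} B)"
  using assms unfolding matroid_def by - (elim conjE, assumption)+

lemma matroid_indep_carrier: "matroid K \<Longrightarrow> indep K I \<Longrightarrow> I \<subseteq> carrier K"
  using matroid_axioms(1) by blast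

lemma matroid_indep_empty: "matroid K \<Longrightarrow> indep K {}"
  by (rule matroid_axioms(2))

lemma matroid_indep_mono: "matroid K \<Longrightarrow> indep K J \<Longrightarrow> I \<subseteq> J \<Longrightarrow> indep K I"
  using matroid_axioms(3) by blast

lemma matroid_augment:
  "matroid K \<Longrightarrow> indep K I \<Longrightarrow> \<not> base K I \<Longrightarrow> base K B \<Longrightarrow> \<exists>x\<in>B - I. indep K (insert x I)"
  using matroid_axioms(4) by blast

lemma matroid_maximal_extension:
  assumes "matroid K" "indep K I" "I \<subseteq> X" "X \<subseteq> carrier K"
  obtains B where "indep K B" "I \<subseteq> B" "B \<subseteq> X" "\<And>J. indep K J \<Longrightarrow> B \<subseteq> J \<Longrightarrow> J \<subseteq> X \<Longrightarrow> J = B"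
proof -
  obtain B where B: "maximal_in {J. indep K J \<and> I \<subseteq> J \<and> J \<subseteq> X} B"
    using matroid_axioms(5)[OF assms(1)] assms(2-4) by blast
  show thesis
  proof (rule that)
    show "indep K B" "I \<subseteq> B" "B \<subseteq> X"
      using B unfolding maximal_in_def by blast+
    show "J = B" if "indep K J" "B \<subseteq> J" "J \<subseteq> X" for J
      using B that unfolding maximal_in_def by blast
  qed
qed

lemma base_indep: "base K B \<Longrightarrow> indep K B"
  unfolding base_iff by blast

lemma base_carrier: "matroid K \<Longrightarrow> base K B \<Longrightarrow> B \<subseteq> carrier K"
  using base_indep matroid_indep_carrier by blast

lemma base_restr_exists:
  assumes "matroid K" "X \<subseteq> carrier K" "indep K J" "J \<subseteq> X"
  obtains Z where "base (restr K X) Z" "J \<subseteq> Z"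
  using matroid_maximal_extension[OF assms(1,3,4,2)] unfolding base_restr_iff by metis

lemma base_restr_of_base:
  assumes "base K B" "B \<subseteq> X"
  shows "base (restr K X) B"
proof -
  have "indep K B" "\<And>J. indep K J \<Longrightarrow> B \<subseteq> J \<Longrightarrow> J = B"
    using assms(1) unfolding base_iff by blast+
  then show ?thesis
    unfolding base_restr_iff using assms(2) by blast
qed

lemma base_restr_self: "indep K I \<Longrightarrow> base (restr K I) I"
  unfolding base_restr_iff by blast

lemma base_restr_Int:
  assumes "matroid K" "base (restr K X) Z" "indep K J" "Z \<subseteq> J"
  shows "J \<inter> X = Z"
proof -
  have "indep K (J \<inter> X)"
    using matroid_indep_mono[OF assms(1,3)] by blast
  then show ?thesis
    using assms(2,4) unfolding base_restr_iff by blast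
qed

lemma base_extend_within:
  assumes "matroid K" "indep K J" "J \<subseteq> Y" "Y \<subseteq> carrier K" "base K B" "B \<subseteq> Y"
  obtains B' where "base K B'" "J \<subseteq> B'" "B' \<subseteq> Y"
proof -
  obtain B' where B': "indep K B'" "J \<subseteq> B'" "B' \<subseteq> Y"
    and max: "\<And>J'. indep K J' \<Longrightarrow> B' \<subseteq> J' \<Longrightarrow> J' \<subseteq> Y \<Longrightarrow> J' = B'"
    using matroid_maximal_extension[OF assms(1-4)] by blast
  have "base K B'"
  proof (rule ccontr)
    assume "\<not> base K B'"
    then obtain x where "x \<in> B - B'" "indep K (insert x B')"
      using matroid_augment[OF assms(1) B'(1) _ assms(5)] by blast
    then show False
      using max[of "insert x B'"] assms(6) B'(3) by blast
  qed
  with B' show thesis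
    using that by blast
qed

lemma base_extend:
  assumes "matroid K" "indep K I"
  obtains B where "base K B" "I \<subseteq> B"
proof -
  obtain B where B: "indep K B" "I \<subseteq> B" "B \<subseteq> carrier K"
    and max: "\<And>J. indep K J \<Longrightarrow> B \<subseteq> J \<Longrightarrow> J \<subseteq> carrier K \<Longrightarrow> J = B"
    using matroid_maximal_extension[OF assms matroid_indep_carrier[OF assms] order.refl] by blast
  have "J = B" if "indep K J" "B \<subseteq> J" for J
    using max[OF that matroid_indep_carrier[OF assms(1) that(1)]] .
  then have "base K B"
    unfolding base_iff using B(1) by blast
  then show thesis
    using B(2) by (rule that)
qed

lemma base_within_contains_outside:
  assumes "matroid K" "X \<subseteq> carrier K" "base (restr K X) Z" "base K B" "B \<inter> X = Z"
    and "base K B'" "B' \<subseteq> X \<union> B"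
  shows "B - X \<subseteq> B'"
proof
  fix s assume s: "s \<in> B - X"
  show "s \<in> B'"
  proof (rule ccontr)
    assume "s \<notin> B'"
    have Z: "indep K Z" "Z \<subseteq> X"
      using assms(3) unfolding base_restr_iff by blast+
    have "X \<union> B - {s} \<subseteq> carrier K"
      using assms(2) base_carrier[OF assms(1,4)] by blast
    then obtain B2 where B2: "base K B2" "Z \<subseteq> B2" "B2 \<subseteq> X \<union> B - {s}"
      using base_extend_within[OF assms(1) Z(1), of "X \<union> B - {s}" B'] Z(2) s \<open>s \<notin> B'\<close> assms(6,7)
      by blast
    have "B2 \<inter> X = Z"
      using base_restr_Int[OF assms(1,3)] B2 base_iff by blast
    then have "B2 \<subseteq> B"
      using B2(3) assms(5) by blast
    then show False
      using bases_subset_eq[OF B2(1) assms(4)] B2(3) s by blast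
  qed
qed

lemma indep_basis_Un_of_indep_contract:
  assumes "matroid K" "X \<subseteq> carrier K" "base (restr K X) Z" "indep (contract K X) T"
  shows "indep K (Z \<union> T)"
proof -
  obtain C where T: "T \<subseteq> carrier K - X" "T \<inter> C = {}"
    and C: "maximal_in {J. indep (dual K) J \<and> J \<subseteq> carrier K - X} C"
    using assms(4) unfolding indep_contract_iff_coindep by blast
  have Cd: "indep (dual K) C" "C \<subseteq> carrier K - X"
    and Cmax: "\<And>J. indep (dual K) J \<Longrightarrow> J \<subseteq> carrier K - X \<Longrightarrow> C \<subseteq> J \<Longrightarrow> J = C"
    using C unfolding maximal_in_def by auto
  obtain B where B: "base K B" "C \<inter> B = {}"
    using Cd(1) unfolding indep_dual by blast
  have Z: "indep K Z" "Z \<subseteq> X"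
    using assms(3) unfolding base_restr_iff by blast+
  have "Z \<subseteq> X \<union> B" "B \<subseteq> X \<union> B" "X \<union> B \<subseteq> carrier K"
    using Z(2) assms(2) base_carrier[OF assms(1) B(1)] by blast+
  then obtain B' where B': "base K B'" "Z \<subseteq> B'" "B' \<subseteq> X \<union> B"
    using base_extend_within[OF assms(1) Z(1) _ _ B(1)] by blast
  have CB': "C \<inter> B' = {}"
    using B(2) B'(3) Cd(2) by blast
  have "T \<subseteq> B'"
  proof
    fix y assume y: "y \<in> T"
    show "y \<in> B'"
    proof (rule ccontr)
      assume "y \<notin> B'"
      then have "indep (dual K) (insert y C)"
        using y T(1) Cd(2) B'(1) CB' unfolding indep_dual by blast
      then have "insert y C = C"
        by (rule Cmax) (use y T(1) Cd(2) in blast)+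
      then show False
        using y T(2) by blast
    qed
  qed
  with B'(2) have "Z \<union> T \<subseteq> B'"
    by blast
  then show ?thesis
    by (rule matroid_indep_mono[OF assms(1) base_indep[OF B'(1)]])
qed

lemma indep_contract_of_indep_basis_Un:
  assumes "matroid K" "X \<subseteq> carrier K" "base (restr K X) Z"
    and "T \<subseteq> carrier K - X" "indep K (Z \<union> T)"
  shows "indep (contract K X) T"
proof -
  obtain B where B: "base K B" "Z \<union> T \<subseteq> B"
    by (rule base_extend[OF assms(1,5)])
  have BX: "B \<inter> X = Z"
    using base_restr_Int[OF assms(1,3) base_indep[OF B(1)]] B(2) by blast
  define C where "C = carrier K - X - B"
  have "indep (dual K) C"
    unfolding indep_dual C_def using B(1) by blast
  moreover have "J = C" if J: "indep (dual K) J" "J \<subseteq> carrier K - X" "C \<subseteq> J" for J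
  proof -
    obtain B' where B': "base K B'" "J \<inter> B' = {}"
      using J(1) unfolding indep_dual by blast
    have "B' \<subseteq> X \<union> B"
      using base_carrier[OF assms(1) B'(1)] B'(2) J(3) unfolding C_def by blast
    then have "B - X \<subseteq> B'"
      by (rule base_within_contains_outside[OF assms(1-3) B(1) BX B'(1)])
    then show "J = C"
      using J(2,3) B'(2) unfolding C_def by blast
  qed
  ultimately have "maximal_in {J. indep (dual K) J \<and> J \<subseteq> carrier K - X} C"
    unfolding maximal_in_def C_def by blast
  moreover have "T \<inter> C = {}"
    using B(2) unfolding C_def by blast
  ultimately show ?thesis
    unfolding indep_contract_iff_coindep using assms(4) by blast
qed

lemma indep_contract_iff:
  assumes "matroid K" "X \<subseteq> carrier K" "base (restr K X) Z"
  shows "indep (contract K X) T \<longleftrightarrow> T \<subseteq> carrier K - X \<and> indep K (Z \<union> T)"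
proof
  assume T: "indep (contract K X) T"
  show "T \<subseteq> carrier K - X \<and> indep K (Z \<union> T)"
    using indep_contract_subset[OF T] indep_basis_Un_of_indep_contract[OF assms T] by blast
next
  assume "T \<subseteq> carrier K - X \<and> indep K (Z \<union> T)"
  then show "indep (contract K X) T"
    using indep_contract_of_indep_basis_Un[OF assms] by blast
qed

lemma base_contract_iff:
  assumes "matroid K" "X \<subseteq> carrier K" "base (restr K X) Z"
  shows "base (contract K X) S \<longleftrightarrow> S \<inter> X = {} \<and> base K (Z \<union> S)"
proof
  assume S: "base (contract K X) S"
  then have "S \<subseteq> carrier K - X" "indep K (Z \<union> S)"
    unfolding base_iff indep_contract_iff[OF assms] by blast+
  moreover have "J = Z \<union> S" if J: "indep K J" "Z \<union> S \<subseteq> J" for J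
  proof -
    have "J \<inter> X = Z"
      using base_restr_Int[OF assms(1,3) J(1)] J(2) by blast
    then have "Z \<union> (J - X) = J" and "J - X \<subseteq> carrier K - X"
      using matroid_indep_carrier[OF assms(1) J(1)] by blast+
    then have "indep (contract K X) (J - X)"
      unfolding indep_contract_iff[OF assms] using J(1) by simp
    then have "J - X = S"
      using S J(2) \<open>S \<subseteq> carrier K - X\<close> unfolding base_iff by blast
    then show ?thesis
      using \<open>J \<inter> X = Z\<close> by blast
  qed
  ultimately show "S \<inter> X = {} \<and> base K (Z \<union> S)"
    unfolding base_iff by blast
next
  assume S: "S \<inter> X = {} \<and> base K (Z \<union> S)"
  have ZX: "Z \<subseteq> X"
    using assms(3) unfolding base_restr_iff by blast
  have "indep (contract K X) S"
    unfolding indep_contract_iff[OF assms] using S base_carrier[OF assms(1)] base_iff by blast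
  moreover have "T = S" if "indep (contract K X) T" "S \<subseteq> T" for T
  proof -
    have "T \<subseteq> carrier K - X" "indep K (Z \<union> T)"
      using that(1) unfolding indep_contract_iff[OF assms] by blast+
    then have "Z \<union> T = Z \<union> S"
      using S that(2) unfolding base_iff by blast
    then show ?thesis
      using \<open>T \<subseteq> carrier K - X\<close> S ZX by blast
  qed
  ultimately show "base (contract K X) S"
    unfolding base_iff by blast
qed

lemma indep_contract_indep:
  assumes "matroid K" "indep K I"
  shows "indep (contract K I) T \<longleftrightarrow> T \<subseteq> carrier K - I \<and> indep K (I \<union> T)"
  using indep_contract_iff[OF assms(1) matroid_indep_carrier[OF assms] base_restr_self[OF assms(2)]] .

lemma base_contract_indep:
  assumes "matroid K" "indep K I"
  shows "base (contract K I) B \<longleftrightarrow> B \<inter> I = {} \<and> base K (I \<union> B)"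
  using base_contract_iff[OF assms(1) matroid_indep_carrier[OF assms] base_restr_self[OF assms(2)]] .

lemma indep_of_indep_contract:
  assumes "matroid K" "X \<subseteq> carrier K" "indep (contract K X) T"
  shows "indep K T"
proof -
  obtain Z where "base (restr K X) Z"
    using base_restr_exists[OF assms(1,2) matroid_indep_empty[OF assms(1)]] by blast
  then have "indep K (Z \<union> T)"
    using indep_basis_Un_of_indep_contract[OF assms(1,2) _ assms(3)] by blast
  then show ?thesis
    by (rule matroid_indep_mono[OF assms(1)]) blast
qed

lemma indep_contract_Int_Un:
  assumes "matroid K" "X \<subseteq> carrier K" "Y \<subseteq> carrier K"
    and "indep (contract K X) A" "indep (contract K Y) T" "A \<subseteq> Y"
  shows "indep (contract K (X \<inter> Y)) (A \<union> T)"
proof -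
  have XY: "X \<inter> Y \<subseteq> carrier K"
    using assms(2) by blast
  obtain Z where Z: "base (restr K (X \<inter> Y)) Z"
    using base_restr_exists[OF assms(1) XY matroid_indep_empty[OF assms(1)]] by blast
  then have Z': "indep K Z" "Z \<subseteq> X \<inter> Y"
    unfolding base_restr_iff by blast+
  obtain Z1 where Z1: "base (restr K X) Z1" "Z \<subseteq> Z1"
    using base_restr_exists[OF assms(1,2) Z'(1)] Z'(2) by blast
  have A: "A \<subseteq> carrier K - X" "indep K (Z1 \<union> A)"
    using assms(4) unfolding indep_contract_iff[OF assms(1,2) Z1(1)] by blast+
  have ZA: "indep K (Z \<union> A)"
    by (rule matroid_indep_mono[OF assms(1) A(2)]) (use Z1(2) in blast)
  obtain Z2 where Z2: "base (restr K Y) Z2" "Z \<union> A \<subseteq> Z2"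
    using base_restr_exists[OF assms(1,3) ZA] Z'(2) assms(6) by blast
  have T: "T \<subseteq> carrier K - Y" "indep K (Z2 \<union> T)"
    using assms(5) unfolding indep_contract_iff[OF assms(1,3) Z2(1)] by blast+
  have "indep K (Z \<union> (A \<union> T))"
    by (rule matroid_indep_mono[OF assms(1) T(2)]) (use Z2(2) in blast)
  then show ?thesis
    unfolding indep_contract_iff[OF assms(1) XY Z] using A(1) T(1) by blast
qed

lemma base_contract_spanning:
  assumes "matroid K" "X \<subseteq> carrier K" "base K B" "B \<subseteq> X"
  shows "base (contract K X) {}"
proof -
  have BX: "base (restr K X) B"
    by (rule base_restr_of_base[OF assms(3,4)])
  have "base K (B \<union> {})"
    using assms(3) by simp
  then show ?thesis
    unfolding base_contract_iff[OF assms(1,2) BX] by simp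
qed

lemma base_of_base_contr_to:
  assumes "matroid K" "base (contr_to K W) I"
  obtains Z where "Z \<inter> W = {}" "base K (Z \<union> I)"
proof -
  have EW: "carrier K - W \<subseteq> carrier K"
    by blast
  obtain Z where Z: "base (restr K (carrier K - W)) Z"
    using base_restr_exists[OF assms(1) EW matroid_indep_empty[OF assms(1)]] by blast
  have "Z \<inter> W = {}"
    using Z unfolding base_restr_iff by blast
  moreover have "base K (Z \<union> I)"
    using assms(2) unfolding contr_to_def base_contract_iff[OF assms(1) EW Z] by blast
  ultimately show thesis
    by (rule that)
qed

section \<open>Contracting an independent set\<close>

lemma contract_augment:
  assumes K: "matroid K" and I: "indep K I"
    and J: "indep (contract K I) J" "\<not> base (contract K I) J" and B: "base (contract K I) B"
  shows "\<exists>x\<in>B - J. indep (contract K I) (insert x J)"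
proof -
  note indep_CI = indep_contract_indep[OF K I]
  note base_CI = base_contract_indep[OF K I]
  have J': "J \<subseteq> carrier K - I" "indep K (I \<union> J)"
    using J(1) unfolding indep_CI by blast+
  have "\<not> base K (I \<union> J)"
    using J(2) J'(1) unfolding base_CI by blast
  moreover have "base K (I \<union> B)"
    using B unfolding base_CI by blast
  ultimately obtain x where x: "x \<in> (I \<union> B) - (I \<union> J)" "indep K (insert x (I \<union> J))"
    using matroid_augment[OF K J'(2)] by blast
  have "x \<in> carrier K"
    using matroid_indep_carrier[OF K x(2)] by blast
  then have "indep (contract K I) (insert x J)"
    unfolding indep_CI using J'(1) x by auto
  then show ?thesis
    using x(1) by blast
qed

lemma contract_maximal_extension:
  assumes K: "matroid K" and I: "indep K I"
    and J: "indep (contract K I) J" "J \<subseteq> X" "X \<subseteq> carrier K - I"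
  shows "\<exists>B. maximal_in {J'. indep (contract K I) J' \<and> J \<subseteq> J' \<and> J' \<subseteq> X} B"
proof -
  note indep_CI = indep_contract_indep[OF K I]
  have IJ: "indep K (I \<union> J)" "I \<union> J \<subseteq> I \<union> X" "I \<union> X \<subseteq> carrier K"
    using J matroid_indep_carrier[OF K I] unfolding indep_CI by blast+
  obtain B where B: "indep K B" "I \<union> J \<subseteq> B" "B \<subseteq> I \<union> X"
    and max: "\<And>J'. indep K J' \<Longrightarrow> B \<subseteq> J' \<Longrightarrow> J' \<subseteq> I \<union> X \<Longrightarrow> J' = B"
    using matroid_maximal_extension[OF K IJ] by blast
  have BI: "I \<union> (B - I) = B"
    using B(2) by blast
  have indep_BI: "indep (contract K I) (B - I)"
    unfolding indep_CI BI using B(1,3) J(3) by blast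
  have JB: "J \<subseteq> B - I" and BX: "B - I \<subseteq> X"
    using B(2,3) J(1) unfolding indep_CI by blast+
  have max_BI: "J' = B - I" if "indep (contract K I) J'" "B - I \<subseteq> J'" "J' \<subseteq> X" for J'
  proof -
    have J': "J' \<subseteq> carrier K - I" "indep K (I \<union> J')"
      using that(1) unfolding indep_CI by blast+
    have "I \<union> J' = B"
      by (rule max[OF J'(2)]) (use that(2,3) BI in blast)+
    then show ?thesis
      using J'(1) by blast
  qed
  have "maximal_in {J'. indep (contract K I) J' \<and> J \<subseteq> J' \<and> J' \<subseteq> X} (B - I)"
    unfolding maximal_in_def using indep_BI JB BX max_BI by blast
  then show ?thesis ..
qed

lemma matroid_contract:
  assumes K: "matroid K" and I: "indep K I"
  shows "matroid (contract K I)"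
proof -
  note indep_CI = indep_contract_indep[OF K I]
  have "\<forall>J. indep (contract K I) J \<longrightarrow> J \<subseteq> carrier (contract K I)"
    by (auto dest: indep_contract_subset)
  moreover have "indep (contract K I) {}"
    unfolding indep_CI using I by simp
  moreover have "indep (contract K I) J" if "indep (contract K I) J'" "J \<subseteq> J'" for J J'
  proof -
    have "J' \<subseteq> carrier K - I" "indep K (I \<union> J')"
      using that(1) unfolding indep_CI by blast+
    moreover have "indep K (I \<union> J)"
      by (rule matroid_indep_mono[OF K \<open>indep K (I \<union> J')\<close>]) (use that(2) in blast)
    ultimately show ?thesis
      unfolding indep_CI using that(2) by blast
  qed
  then have "\<forall>J J'. indep (contract K I) J' \<and> J \<subseteq> J' \<longrightarrow> indep (contract K I) J"
    by blast
  moreover have "\<forall>J B. indep (contract K I) J \<and> \<not> base (contract K I) J \<and> base (contract K I) B \<longrightarrow>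
      (\<exists>x\<in>B - J. indep (contract K I) (insert x J))"
    using contract_augment[OF K I] by blast
  moreover have "\<forall>J X. indep (contract K I) J \<and> J \<subseteq> X \<and> X \<subseteq> carrier (contract K I) \<longrightarrow>
      (\<exists>B. maximal_in {J'. indep (contract K I) J' \<and> J \<subseteq> J' \<and> J' \<subseteq> X} B)"
    using contract_maximal_extension[OF K I] by simp
  ultimately show ?thesis
    unfolding matroid_def by (intro conjI) assumption+
qed

lemma base_restr_Un_contract:
  assumes "matroid K" "base (restr K X) I" "base (restr (contract K I) Y) B"
  shows "base (restr K (X \<union> Y)) (I \<union> B)"
proof -
  have I: "indep K I" "I \<subseteq> X"
    using assms(2) unfolding base_restr_iff by blast+
  note indep_CI = indep_contract_indep[OF assms(1) I(1)]
  have B: "B \<subseteq> carrier K - I" "indep K (I \<union> B)" "B \<subseteq> Y"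
    and maxB: "\<And>J. indep (contract K I) J \<Longrightarrow> B \<subseteq> J \<Longrightarrow> J \<subseteq> Y \<Longrightarrow> J = B"
    using assms(3) unfolding base_restr_iff indep_CI by blast+
  have "J = I \<union> B" if J: "indep K J" "I \<union> B \<subseteq> J" "J \<subseteq> X \<union> Y" for J
  proof -
    have JX: "J \<inter> X = I"
      using base_restr_Int[OF assms(1,2) J(1)] J(2) by blast
    have "I \<union> (J - I) = J"
      using J(2) by blast
    then have "indep (contract K I) (J - I)"
      unfolding indep_CI using J(1) matroid_indep_carrier[OF assms(1) J(1)] by auto
    then have "J - I = B"
      using maxB B(1) J(2,3) JX by blast
    then show ?thesis
      using J(2) by blast
  qed
  then show ?thesis
    unfolding base_restr_iff using B I by blast
qed

lemma indep_contract_contract: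
  assumes "matroid K" "indep K I" "Y \<subseteq> carrier K - I"
  shows "indep (contract (contract K I) Y) = indep (contract K (I \<union> Y))"
proof -
  have KI: "matroid (contract K I)"
    by (rule matroid_contract[OF assms(1,2)])
  have YC: "Y \<subseteq> carrier (contract K I)"
    using assms(3) by simp
  obtain Z where Z: "base (restr (contract K I) Y) Z"
    using base_restr_exists[OF KI YC matroid_indep_empty[OF KI]] by blast
  have IZ: "base (restr K (I \<union> Y)) (I \<union> Z)"
    by (rule base_restr_Un_contract[OF assms(1) base_restr_self[OF assms(2)] Z])
  have IY: "I \<union> Y \<subseteq> carrier K"
    using assms(3) matroid_indep_carrier[OF assms(1,2)] by blast
  have "Z \<subseteq> Y"
    using Z unfolding base_restr_iff by blast
  show ?thesis
  proof
    fix T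
    show "indep (contract (contract K I) Y) T = indep (contract K (I \<union> Y)) T"
      unfolding indep_contract_iff[OF KI YC Z] indep_contract_iff[OF assms(1) IY IZ]
        indep_contract_indep[OF assms(1,2)] carrier_contract
      using assms(3) \<open>Z \<subseteq> Y\<close> by (auto simp: Un_assoc)
  qed
qed

lemma indep_contr_to_contract:
  assumes "matroid K" "indep K I" "W \<inter> I = {}"
  shows "indep (contr_to (contract K I) W) = indep (contr_to K W)"
proof -
  have "I \<union> (carrier K - I - W) = carrier K - W"
    using matroid_indep_carrier[OF assms(1,2)] assms(3) by blast
  then show ?thesis
    unfolding contr_to_def carrier_contract
    using indep_contract_contract[OF assms(1,2), of "carrier K - I - W"] by simp
qed

lemma base_contr_to_contract_empty:
  assumes "matroid K" "indep K I" "base K B" "W \<inter> I = {}" "W \<inter> B = {}"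
  shows "base (contr_to (contract K I) W) {}"
proof -
  have EW: "carrier K - W \<subseteq> carrier K" and BW: "B \<subseteq> carrier K - W"
    using base_carrier[OF assms(1,3)] assms(5) by blast+
  have "base (contr_to K W) {}"
    unfolding contr_to_def by (rule base_contract_spanning[OF assms(1) EW assms(3) BW])
  moreover have "base (contr_to (contract K I) W) = base (contr_to K W)"
    by (rule base_cong[OF indep_contr_to_contract[OF assms(1,2,4)]])
  ultimately show ?thesis
    by simp
qed

lemma loop_contract:
  assumes "matroid K" "base (restr K X) I" "e \<in> X - I" "e \<in> carrier K"
  shows "loop (contract K I) e"
proof -
  have "indep K I"
    using assms(2) unfolding base_restr_iff by blast
  have "\<not> indep K (I \<union> {e})"
    using assms(2,3) unfolding base_restr_iff by blast
  then show ?thesis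
    unfolding loop_def indep_contract_indep[OF assms(1) \<open>indep K I\<close>] using assms(3,4) by simp
qed

section \<open>Waves\<close>

lemma wave_subset_Wave: "wave M N W \<Longrightarrow> W \<subseteq> Wave M N"
  unfolding Wave_def by blast

lemma Wave_subset_carrier: "Wave M N \<subseteq> carrier M"
  unfolding Wave_def wave_def by blast

lemma wave_Un_of_contract_wave:
  assumes M: "matroid M" and N: "matroid N" and "carrier M = E" "carrier N = E" "W \<subseteq> E"
    and I: "base (restr M W) I" "indep (contr_to N W) I"
    and W': "wave (contract M I) (contract N I) W'"
  shows "wave M N (W \<union> W')"
proof -
  have "I \<subseteq> W"
    using I(1) unfolding base_restr_iff by blast
  have EW: "E - W \<subseteq> carrier N" "E - W' \<subseteq> carrier N"
    using assms(4) by blast+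
  have IN: "indep (contract N (E - W)) I"
    using I(2) assms(4) unfolding contr_to_def by simp
  then have "indep N I"
    by (rule indep_of_indep_contract[OF N EW(1)])
  obtain B where B: "base (restr (contract M I) W') B" "indep (contr_to (contract N I) W') B"
    and W'E: "W' \<subseteq> E - I"
    using W' assms(3) unfolding wave_def by auto
  have base_union: "base (restr M (W \<union> W')) (I \<union> B)"
    by (rule base_restr_Un_contract[OF M I(1) B(1)])
  have "W' \<inter> I = {}"
    using W'E by blast
  then have "indep (contr_to N W') B"
    using B(2) indep_contr_to_contract[OF N \<open>indep N I\<close>] by simp
  then have "indep (contract N (E - W')) B"
    unfolding contr_to_def assms(4) .
  then have "indep (contract N ((E - W) \<inter> (E - W'))) (I \<union> B)"
    using indep_contract_Int_Un[OF N EW IN] W'E \<open>I \<subseteq> W\<close> assms(5) by blast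
  then have "indep (contr_to N (W \<union> W')) (I \<union> B)"
    unfolding contr_to_def assms(4) by (simp add: Diff_Un)
  then show ?thesis
    unfolding wave_def using base_union assms(3,5) W'E by blast
qed

theorem mainTheorem8:
  fixes M N :: "'a matroid" and E :: "'a set"
  assumes "matroid M" and "matroid N"
    and "carrier M = E" and "carrier N = E"
    and "I \<in> common_bases M N (Wave M N)"
  shows "nice_feasible M N I"
proof -
  let ?W = "Wave M N"
  have WE: "?W \<subseteq> E"
    using Wave_subset_carrier[of M N] assms(3) by simp
  have bM: "base (restr M ?W) I" and bN: "base (contr_to N ?W) I"
    using assms(5) unfolding common_bases_def by blast+
  have indM: "indep M I"
    using bM unfolding base_restr_iff by blast
  obtain Z where ZW: "Z \<inter> ?W = {}" and ZI: "base N (Z \<union> I)"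
    by (rule base_of_base_contr_to[OF assms(2) bN])
  have indN: "indep N I"
    by (rule matroid_indep_mono[OF assms(2) base_indep[OF ZI]]) blast
  have waves: "W' \<subseteq> ?W - I" if W': "wave (contract M I) (contract N I) W'" for W'
  proof -
    have "wave M N (?W \<union> W')"
      by (rule wave_Un_of_contract_wave[OF assms(1-4) WE bM base_indep[OF bN] W'])
    moreover have "W' \<inter> I = {}"
      using W' unfolding wave_def by auto
    ultimately show ?thesis
      using wave_subset_Wave by blast
  qed
  have rank0: "base (contr_to (contract N I) W') {}" if "W' \<subseteq> ?W - I" for W'
    by (rule base_contr_to_contract_empty[OF assms(2) indN ZI]) (use that ZW in blast)+
  have "indep (contract M I) {}"
    unfolding indep_contract_indep[OF assms(1) indM] using indM by simp
  then have "cond (contract M I) (contract N I)"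
    unfolding cond_def using waves rank0 by blast
  moreover have "Wave (contract M I) (contract N I) \<subseteq> ?W - I"
    unfolding Wave_def[of "contract M I"] using waves by blast
  then have "cond_plus (contract M I) (contract N I)"
    unfolding cond_plus_def using loop_contract[OF assms(1) bM] rank0 WE assms(3) by blast
  ultimately show ?thesis
    unfolding nice_feasible_def feasible_def using indM indN by blast
qed

end
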